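(* Each of the following, with the convention $\boldsymbol{\alpha}_0=\boldsymbol{\beta}_0=1$ and the displayed formulas valid for $n\ge1$, is a WP-Bailey pair (with the indicated value of $a$, and arbitrary generic $k$): (i) ($a=q$) $\boldsymbol{\alpha}_n=\dfrac{(-1)^n(q^{-n}-q^{n+1})}{1-q}$, $\boldsymbol{\beta}_n=\dfrac{(-1)^n(k^2;q^2)_n}{q^n(q^2;q^2)_n}$; (ii) ($a=q$) $\boldsymbol{\alpha}_n=\dfrac{q^{-n/2}+q^{n/2+1/2}}{1+q^{1/2}}$, $\boldsymbol{\beta}_n=\dfrac{(k,kq^{-1/2};q)_n}{(q^{3/2},q;q)_n}\,q^{-n/2}$; (iii) ($a=1$) $\boldsymbol{\alpha}_n=(-1)^nq^{-n^2/2}(q^{-n/2}+q^{n/2})$, $\boldsymbol{\beta}_n=\dfrac{(-1)^n(k;q)_n}{q^{(n^2+n)/2}(q;q)_n}$.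
   Context: Notation: $(x;q)_n=\prod_{i=0}^{n-1}(1-xq^i)$, $(x_1,\dots,x_j;q)_n=(x_1;q)_n\cdots(x_j;q)_n$. A pair of sequences $(\boldsymbol{\alpha}_n(a,k,q),\boldsymbol{\beta}_n(a,k,q))_{n\ge0}$ is a WP-Bailey pair (relative to $a$, with parameter $k$) if $\boldsymbol{\alpha}_0=1$ and for all $n\ge0$ \[\boldsymbol{\beta}_n=\sum_{j=0}^n\frac{(k/a;q)_{n-j}(k;q)_{n+j}}{(q;q)_{n-j}(aq;q)_{n+j}}\boldsymbol{\alpha}_j.\] *)

theory Defs
  imports Complex_Main
begin

definition qpoch :: "complex \<Rightarrow> complex \<Rightarrow> nat \<Rightarrow> complex" where
  "qpoch x q n = (\<Prod>i<n. 1 - x * q ^ i)"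

definition WP_Bailey_pair ::
  "complex \<Rightarrow> complex \<Rightarrow> complex \<Rightarrow> (nat \<Rightarrow> complex) \<Rightarrow> (nat \<Rightarrow> complex) \<Rightarrow> bool" where
  "WP_Bailey_pair a k q \<alpha> \<beta> \<longleftrightarrow>
     \<alpha> 0 = 1 \<and>
     (\<forall>n. \<beta> n = (\<Sum>j=0..n. qpoch (k / a) q (n - j) * qpoch k q (n + j)
                      / (qpoch q q (n - j) * qpoch (a * q) q (n + j)) * \<alpha> j))"

end

theory Submission
  imports Defs
begin

text \<open>Each \<open>\<beta>\<close> satisfies a first-order recurrence \<open>\<beta>\<^sub>n\<^sub>+\<^sub>1 = c\<^sub>n \<beta>\<^sub>n\<close>, so it suffices
  to show that the WP-Bailey sum \<open>\<Sum>\<^sub>j F(n,j)\<close> obeys the same recurrence. This is done by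
  creative telescoping: for a suitable certificate \<open>G\<close> one has
  \<open>F(n+1,j) - c\<^sub>n F(n,j) = G(n,j+1) - G(n,j)\<close>. Writing \<open>n = m + j\<close>, the certificate identity
  reduces, after cancelling common q-Pochhammer factors, to an identity of rational functions
  in \<open>q\<^sup>m\<close> and \<open>q\<^sup>j\<close>, checked by clearing denominators. The denominators are all of the
  form \<open>1 - r\<^sup>N\<close> with \<open>N > 0\<close>, which is where genericity of \<open>r\<close> is needed.\<close>

lemma qpoch_0 [simp]: "qpoch x q 0 = 1"
  by (simp add: qpoch_def)

lemma qpoch_Suc: "qpoch x q (Suc n) = qpoch x q n * (1 - x * q ^ n)"
  by (simp add: qpoch_def)

definition qpoch_ratio :: "complex \<Rightarrow> complex \<Rightarrow> complex \<Rightarrow> nat \<Rightarrow> complex" where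
  "qpoch_ratio x y q m = (1 - x * q ^ m) / (1 - y * q ^ m)"

lemma qpoch_quotient_Suc:
  "qpoch x q (Suc m) / qpoch y q (Suc m) = qpoch x q m / qpoch y q m * qpoch_ratio x y q m"
  by (simp add: qpoch_Suc qpoch_ratio_def)

lemma sum_telescope_step:
  fixes F :: "nat \<Rightarrow> 'a::comm_ring"
  assumes "\<And>j. j \<le> n \<Longrightarrow> F' j - c * F j = G (Suc j) - G j"
    and "F' (Suc n) + G (Suc n) - G 0 = 0"
  shows "(\<Sum>j=0..Suc n. F' j) = c * (\<Sum>j=0..n. F j)"
proof -
  have "(\<Sum>j=0..n. F' j) = (\<Sum>j=0..n. c * F j + (G (Suc j) - G j))"
    using assms(1) by (intro sum.cong) (auto simp: algebra_simps)
  also have "\<dots> = c * (\<Sum>j=0..n. F j) + (G (Suc n) - G 0)"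
    by (simp add: sum.distrib sum_distrib_left sum_Suc_diff)
  moreover have "F' (Suc n) = G 0 - G (Suc n)"
    using assms(2) by (simp add: algebra_simps)
  ultimately show ?thesis
    by simp
qed

text \<open>With \<open>A\<^sub>m = (k/a;q)\<^sub>m/(q;q)\<^sub>m\<close> and \<open>B\<^sub>s = (k;q)\<^sub>s/(aq;q)\<^sub>s\<close> the WP-Bailey summand is
  \<open>A\<^sub>n\<^sub>-\<^sub>j B\<^sub>n\<^sub>+\<^sub>j \<alpha>\<^sub>j\<close>; the hypotheses \<open>step\<close> and \<open>diagonal\<close> say, after dividing out \<open>A\<^sub>m B\<^sub>s\<close>,
  that \<open>G(n,j) = C\<^sub>n A\<^sub>n\<^sub>+\<^sub>1\<^sub>-\<^sub>j B\<^sub>n\<^sub>+\<^sub>j \<gamma>\<^sub>j\<close> is a telescoping certificate.\<close>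

lemma WP_Bailey_pair_by_certificate:
  fixes a k q :: complex and \<alpha> \<beta> \<gamma> c C :: "nat \<Rightarrow> complex"
  assumes \<alpha>0: "\<alpha> 0 = 1" and \<beta>0: "\<beta> 0 = 1" and \<gamma>0: "\<gamma> 0 = 0"
    and \<beta>_Suc: "\<And>n. \<beta> (Suc n) = c n * \<beta> n"
    and step: "\<And>m j. \<alpha> j * (qpoch_ratio (k/a) q q m * qpoch_ratio k (a*q) q (m + 2*j) - c (m + j))
                  = C (m + j) * (qpoch_ratio k (a*q) q (m + 2*j) * \<gamma> (Suc j) - qpoch_ratio (k/a) q q m * \<gamma> j)"
    and diagonal: "\<And>n. qpoch_ratio k (a*q) q (Suc (2*n)) * \<alpha> (Suc n) + C n * \<gamma> (Suc n) = 0"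
  shows "WP_Bailey_pair a k q \<alpha> \<beta>"
proof -
  define A where "A m = qpoch (k/a) q m / qpoch q q m" for m
  define B where "B s = qpoch k q s / qpoch (a*q) q s" for s
  define F where "F n j = A (n - j) * B (n + j) * \<alpha> j" for n j
  define G where "G n j = C n * A (Suc n - j) * B (n + j) * \<gamma> j" for n j
  have A_Suc: "A (Suc m) = A m * qpoch_ratio (k/a) q q m" for m
    unfolding A_def by (rule qpoch_quotient_Suc)
  have B_Suc: "B (Suc s) = B s * qpoch_ratio k (a*q) q s" for s
    unfolding B_def by (rule qpoch_quotient_Suc)
  have F_step: "F (Suc n) j - c n * F n j = G n (Suc j) - G n j" if "j \<le> n" for n j
  proof -
    obtain m where n: "n = m + j"
      using \<open>j \<le> n\<close> le_Suc_ex by (metis add.commute)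
    define s where "s = m + 2*j"
    have idx: "Suc n - j = Suc m" "n - j = m" "Suc n + j = Suc s" "n + Suc j = Suc s"
        "Suc n - Suc j = m" "n + j = s"
      by (simp_all add: n s_def)
    have "F (Suc n) j - c n * F n j - (G n (Suc j) - G n j)
        = A m * B s * (\<alpha> j * (qpoch_ratio (k/a) q q m * qpoch_ratio k (a*q) q s - c n)
            - C n * (qpoch_ratio k (a*q) q s * \<gamma> (Suc j) - qpoch_ratio (k/a) q q m * \<gamma> j))"
      unfolding F_def G_def idx by (simp add: A_Suc B_Suc algebra_simps)
    also have "\<dots> = 0"
      using step[where m = m and j = j] by (simp add: n s_def)
    finally show ?thesis
      by simp
  qed
  have F_diagonal: "F (Suc n) (Suc n) + G n (Suc n) - G n 0 = 0" for n
  proof -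
    define s where "s = Suc (2*n)"
    have idx: "Suc n + Suc n = Suc s" "n + Suc n = s"
      by (simp_all add: s_def)
    have "F (Suc n) (Suc n) + G n (Suc n)
        = B s * (qpoch_ratio k (a*q) q s * \<alpha> (Suc n) + C n * \<gamma> (Suc n))"
      unfolding F_def G_def idx by (simp add: A_def B_Suc algebra_simps)
    then show ?thesis
      using diagonal[of n] by (simp add: G_def \<gamma>0 s_def)
  qed
  have "\<beta> n = (\<Sum>j=0..n. F n j)" for n
  proof (induction n)
    case 0
    show ?case by (simp add: F_def A_def B_def \<alpha>0 \<beta>0)
  next
    case (Suc n)
    have "(\<Sum>j=0..Suc n. F (Suc n) j) = c n * (\<Sum>j=0..n. F n j)"
      using F_step F_diagonal by (intro sum_telescope_step[where G = "G n"])
    then show ?case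
      using Suc.IH by (simp add: \<beta>_Suc)
  qed
  then show ?thesis
    unfolding WP_Bailey_pair_def F_def A_def B_def by (simp add: \<alpha>0)
qed

lemma WP_pair_i_step_identity:
  fixes q x u k e :: complex
  assumes "q \<noteq> 0" "1 - q \<noteq> 0" "1 - q*x \<noteq> 0" "1 - q*q*(x*u^2) \<noteq> 0" "1 - q^2*(x*u)^2 \<noteq> 0"
  shows "(1 - q*u^2)/(1 - q) * e *
      ((1 - k/q*x)/(1 - q*x) * ((1 - k*(x*u^2))/(1 - q*q*(x*u^2)))
        - -(1 - k^2*(x*u)^2)/(q*(1 - q^2*(x*u)^2)))
    = -(1 - k*q*(x*u)^2)/((1 - q)*(1 - q^2*(x*u)^2)) *
      ((1 - k*(x*u^2))/(1 - q*q*(x*u^2)) * (-(1 - q^2*u^2)/q * e)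
        - (1 - k/q*x)/(1 - q*x) * ((1 - u^2) * e))"
  using assms by (simp add: divide_simps) algebra

lemma WP_pair_i_diagonal_identity:
  fixes q x k e :: complex
  assumes "1 - q \<noteq> 0" "1 - q*q*(q*x^2) \<noteq> 0" "1 - q^2*x^2 \<noteq> 0"
  shows "(1 - k*(q*x^2))/(1 - q*q*(q*x^2)) * ((1 - q*(q*x)^2)/(1 - q) * e)
    + -(1 - k*q*x^2)/((1 - q)*(1 - q^2*x^2)) * ((1 - (q*x)^2) * e) = 0"
  using assms by (simp add: divide_simps) algebra

lemma WP_Bailey_pair_i:
  fixes q k :: complex
  assumes q0: "q \<noteq> 0" and no_root: "\<And>N. 0 < N \<Longrightarrow> q ^ N \<noteq> 1"
  shows "WP_Bailey_pair q k q
      (\<lambda>n. if n = 0 then 1 else (-1) ^ n * (1 / q ^ n - q ^ (n + 1)) / (1 - q))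
      (\<lambda>n. if n = 0 then 1 else (-1) ^ n * qpoch (k ^ 2) (q ^ 2) n / (q ^ n * qpoch (q ^ 2) (q ^ 2) n))"
    (is "WP_Bailey_pair q k q ?\<alpha> ?\<beta>")
proof -
  have nz: "1 - q ^ N \<noteq> 0" if "0 < N" for N
    using no_root[OF that] by simp
  define E where "E j = (-1) ^ j / q ^ j" for j :: nat
  define \<gamma> where "\<gamma> j = (1 - (q ^ j)^2) * E j" for j :: nat
  define c where "c n = -(1 - k^2 * (q^2)^n) / (q * (1 - q^2 * (q^2)^n))" for n :: nat
  define C where "C n = -(1 - k*q*(q^2)^n) / ((1 - q) * (1 - q^2 * (q^2)^n))" for n :: nat
  have \<alpha>_eq: "?\<alpha> j = (1 - q*(q^j)^2)/(1 - q) * E j" for j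
    using q0 nz[of 1] by (simp add: E_def field_simps power2_eq_square)
  have \<gamma>_Suc: "\<gamma> (Suc j) = -(1 - q^2*(q^j)^2)/q * E j" for j
    using q0 by (simp add: \<gamma>_def E_def field_simps power2_eq_square)
  show ?thesis
  proof (rule WP_Bailey_pair_by_certificate[where c = c and C = C and \<gamma> = \<gamma>])
    show "?\<beta> (Suc n) = c n * ?\<beta> n" for n
      by (simp add: c_def qpoch_Suc divide_inverse inverse_mult_distrib mult_ac) (simp add: algebra_simps)
    show "?\<alpha> j * (qpoch_ratio (k/q) q q m * qpoch_ratio k (q*q) q (m + 2*j) - c (m + j))
        = C (m + j) * (qpoch_ratio k (q*q) q (m + 2*j) * \<gamma> (Suc j) - qpoch_ratio (k/q) q q m * \<gamma> j)" for m j
    proof -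
      have pow: "q^(m + 2*j) = q^m*(q^j)^2" "(q^2)^(m + j) = (q^m*q^j)^2"
          "q^(2 * Suc (m + j)) = q^2*(q^m*q^j)^2"
        by (simp_all add: power_add power_mult_distrib mult.commute flip: power_mult)
          (simp add: power2_eq_square)
      show ?thesis
        unfolding \<alpha>_eq \<gamma>_Suc c_def C_def qpoch_ratio_def pow unfolding \<gamma>_def
      proof (rule WP_pair_i_step_identity)
        show "1 - q * q ^ m \<noteq> 0"
          using nz[of "Suc m"] by simp
        show "1 - q * q * (q ^ m * (q ^ j)\<^sup>2) \<noteq> 0"
          using nz[of "Suc (Suc (m + 2*j))"] by (simp add: pow(1) mult.assoc)
        show "1 - q\<^sup>2 * (q ^ m * q ^ j)\<^sup>2 \<noteq> 0"
          using nz[of "2 * Suc (m + j)", unfolded pow(3)] by simp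
      qed (use q0 nz[of 1] in simp_all)
    qed
    show "qpoch_ratio k (q*q) q (Suc (2*n)) * ?\<alpha> (Suc n) + C n * \<gamma> (Suc n) = 0" for n
    proof -
      have pow: "q^Suc (2*n) = q*(q^n)^2" "q^Suc n = q*q^n" "(q^2)^n = (q^n)^2"
        by (simp_all add: mult.commute flip: power_mult)
      have pow': "q^Suc (Suc (Suc (2*n))) = q*q*(q*(q^n)^2)" "q^(2 * Suc n) = q^2*(q^n)^2"
        by (metis pow(1) power_Suc mult.assoc) (metis pow(3) power_mult power_Suc)
      show ?thesis
        unfolding \<alpha>_eq \<gamma>_def C_def qpoch_ratio_def unfolding pow
      proof (rule WP_pair_i_diagonal_identity)
        show "1 - q*q*(q*(q^n)^2) \<noteq> 0"
          using nz[of "Suc (Suc (Suc (2*n)))", unfolded pow'] by simp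
        show "1 - q^2*(q^n)^2 \<noteq> 0"
          using nz[of "2 * Suc n", unfolded pow'] by simp
      qed (use nz[of 1] in simp)
    qed
  qed (simp_all add: \<gamma>_def)
qed

lemma WP_pair_ii_step_identity:
  fixes q r x u k e :: complex
  assumes "q = r^2" "r \<noteq> 0" "1 + r \<noteq> 0" "1 - q*x \<noteq> 0" "1 - q*q*(x*u^2) \<noteq> 0"
    "1 - r^3*(x*u) \<noteq> 0" "1 - q*(x*u) \<noteq> 0"
  shows "(1 + r*u)/(1 + r) * e *
      ((1 - k/q*x)/(1 - q*x) * ((1 - k*(x*u^2))/(1 - q*q*(x*u^2)))
        - (1 - k*(x*u))*(1 - k/r*(x*u))/((1 - r^3*(x*u))*(1 - q*(x*u))) * (1/r))
    = -(1 - k*q*(x*u)^2)/((1 + r)*(1 - q*(x*u))*(1 - r^3*(x*u))) *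
      ((1 - k*(x*u^2))/(1 - q*q*(x*u^2)) * ((1 - q*u)/r * e)
        - (1 - k/q*x)/(1 - q*x) * ((1 - u) * e))"
proof -
  have "q \<noteq> 0" using assms(1,2) by simp
  with assms(2-) show ?thesis
    by (simp add: divide_simps) (unfold assms(1), algebra)
qed

lemma WP_pair_ii_diagonal_identity:
  fixes q r x k e :: complex
  assumes "q = r^2" "1 + r \<noteq> 0" "1 - q*q*(q*x^2) \<noteq> 0" "1 - q*x \<noteq> 0" "1 - r^3*x \<noteq> 0"
  shows "(1 - k*(q*x^2))/(1 - q*q*(q*x^2)) * ((1 + r*(q*x))/(1 + r) * e)
    + -(1 - k*q*x^2)/((1 + r)*(1 - q*x)*(1 - r^3*x)) * ((1 - q*x) * e) = 0"
  using assms(2-) by (simp add: divide_simps) (unfold assms(1), algebra)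

lemma WP_Bailey_pair_ii:
  fixes q r k :: complex
  assumes q_eq: "q = r^2" and r0: "r \<noteq> 0" and no_root: "\<And>N. 0 < N \<Longrightarrow> r ^ N \<noteq> 1"
  shows "WP_Bailey_pair q k q
      (\<lambda>n. if n = 0 then 1 else (1 / r ^ n + r ^ (n + 1)) / (1 + r))
      (\<lambda>n. if n = 0 then 1 else qpoch k q n * qpoch (k / r) q n / (qpoch (r ^ 3) q n * qpoch q q n) * (1 / r ^ n))"
    (is "WP_Bailey_pair q k q ?\<alpha> ?\<beta>")
proof -
  have nz: "1 - r ^ N \<noteq> 0" if "0 < N" for N
    using no_root[OF that] by simp
  have q_pow: "q ^ n = r ^ (2*n)" for n
    by (simp add: q_eq power_mult)
  have nzq: "1 - q ^ N \<noteq> 0" if "0 < N" for N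
    using nz[of "2*N"] that by (simp add: q_pow)
  have r1: "1 + r \<noteq> 0"
    using nz[of 2] by (auto simp: add_eq_0_iff)
  define E where "E j = 1 / r ^ j" for j :: nat
  define \<gamma> where "\<gamma> j = (1 - q^j) * E j" for j :: nat
  define c where "c n = (1 - k*q^n)*(1 - k/r*q^n)/((1 - r^3*q^n)*(1 - q*q^n)) * (1/r)" for n :: nat
  define C where "C n = -(1 - k*q*(q^n)^2)/((1 + r)*(1 - q*q^n)*(1 - r^3*q^n))" for n :: nat
  have \<alpha>_eq: "?\<alpha> j = (1 + r*q^j)/(1 + r) * E j" for j
  proof (cases "j = 0")
    case True
    then show ?thesis using r1 by (simp add: E_def)
  next
    case False
    have "q^j = r^j * r^j"
      by (simp add: q_pow mult_2 power_add)
    then have "1/r^j + r^(j+1) = (1 + r*q^j) * (1/r^j)"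
      using r0 by (simp add: field_simps)
    with False show ?thesis
      by (simp add: E_def)
  qed
  have \<gamma>_Suc: "\<gamma> (Suc j) = (1 - q*q^j)/r * E j" for j
    using r0 by (simp add: \<gamma>_def E_def)
  show ?thesis
  proof (rule WP_Bailey_pair_by_certificate[where c = c and C = C and \<gamma> = \<gamma>])
    show "?\<beta> (Suc n) = c n * ?\<beta> n" for n
      by (simp add: c_def qpoch_Suc divide_inverse inverse_mult_distrib mult_ac)
    show "?\<alpha> j * (qpoch_ratio (k/q) q q m * qpoch_ratio k (q*q) q (m + 2*j) - c (m + j))
        = C (m + j) * (qpoch_ratio k (q*q) q (m + 2*j) * \<gamma> (Suc j) - qpoch_ratio (k/q) q q m * \<gamma> j)" for m j
    proof -
      have pow: "q^(m + 2*j) = q^m*(q^j)^2" "q^(m + j) = q^m*q^j"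
        by (simp_all add: power_add mult.commute flip: power_mult)
      show ?thesis
        unfolding \<alpha>_eq \<gamma>_Suc c_def C_def qpoch_ratio_def pow unfolding \<gamma>_def
      proof (rule WP_pair_ii_step_identity[OF q_eq r0 r1])
        show "1 - q * q ^ m \<noteq> 0"
          using nzq[of "Suc m"] by simp
        show "1 - q * q * (q ^ m * (q ^ j)\<^sup>2) \<noteq> 0"
          using nzq[of "Suc (Suc (m + 2*j))"] by (simp add: pow(1) mult.assoc)
        show "1 - q * (q ^ m * q ^ j) \<noteq> 0"
          using nzq[of "Suc (m + j)"] by (simp add: pow(2))
        show "1 - r ^ 3 * (q ^ m * q ^ j) \<noteq> 0"
          using nz[of "3 + 2*(m + j)"] by (simp add: power_add distrib_left q_pow)
      qed
    qed
    show "qpoch_ratio k (q*q) q (Suc (2*n)) * ?\<alpha> (Suc n) + C n * \<gamma> (Suc n) = 0" for n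
    proof -
      have pow: "q^Suc (2*n) = q*(q^n)^2" "q^Suc n = q*q^n"
        by (simp_all add: mult.commute flip: power_mult)
      have pow': "q^Suc (Suc (Suc (2*n))) = q*q*(q*(q^n)^2)"
        by (metis pow(1) power_Suc mult.assoc)
      show ?thesis
        unfolding \<alpha>_eq \<gamma>_def C_def qpoch_ratio_def unfolding pow
      proof (rule WP_pair_ii_diagonal_identity[OF q_eq r1])
        show "1 - q*q*(q*(q^n)^2) \<noteq> 0"
          using nzq[of "Suc (Suc (Suc (2*n)))", unfolded pow'] by simp
        show "1 - q*q^n \<noteq> 0"
          using nzq[of "Suc n"] by simp
        show "1 - r^3*q^n \<noteq> 0"
          using nz[of "3 + 2*n"] by (simp add: power_add q_pow)
      qed
    qed
  qed (simp_all add: \<gamma>_def)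
qed

lemma WP_pair_iii_step_identity:
  fixes q x u k e :: complex
  assumes "q \<noteq> 0" "x \<noteq> 0" "u \<noteq> 0" "1 - q*x \<noteq> 0" "1 - q*(x*u^2) \<noteq> 0" "1 - q*(x*u) \<noteq> 0"
  shows "(1 + u) * e *
      ((1 - k*x)/(1 - q*x) * ((1 - k*(x*u^2))/(1 - q*(x*u^2)))
        - -(1 - k*(x*u))/((1 - q*(x*u))*(q*(x*u))))
    = (-(1 - k*(x*u))/(1 - q*(x*u)) - 1/(q*(x*u))) *
      ((1 - k*(x*u^2))/(1 - q*(x*u^2)) * - e - (1 - k*x)/(1 - q*x) * (u * e))"
  using assms by (simp add: divide_simps) algebra

lemma WP_pair_iii_step0_identity:
  fixes q x k :: complex
  assumes "q \<noteq> 0" "x \<noteq> 0" "1 - q*x \<noteq> 0"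
  shows "(1 - k*x)/(1 - q*x) * ((1 - k*x)/(1 - q*x)) - -(1 - k*x)/((1 - q*x)*(q*x))
    = (-(1 - k*x)/(1 - q*x) - 1/(q*x)) * ((1 - k*x)/(1 - q*x) * - 1)"
  using assms by (simp add: divide_simps) algebra

lemma WP_pair_iii_diagonal_identity:
  fixes q x k e :: complex
  assumes "q \<noteq> 0" "x \<noteq> 0" "1 - q*(q*x^2) \<noteq> 0" "1 - q*x \<noteq> 0"
  shows "(1 - k*(q*x^2))/(1 - q*(q*x^2)) * ((1 + q*x) * e)
    + (-(1 - k*x)/(1 - q*x) - 1/(q*x)) * (q*x * e) = 0"
  using assms by (simp add: divide_simps) algebra

lemma WP_Bailey_pair_iii:
  fixes q r k :: complex
  assumes q_eq: "q = r^2" and r0: "r \<noteq> 0" and no_root: "\<And>N. 0 < N \<Longrightarrow> q ^ N \<noteq> 1"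
  shows "WP_Bailey_pair 1 k q
      (\<lambda>n. if n = 0 then 1 else (-1) ^ n * (1 / r ^ (n ^ 2)) * (1 / r ^ n + r ^ n))
      (\<lambda>n. if n = 0 then 1 else (-1) ^ n * qpoch k q n / (r ^ (n ^ 2 + n) * qpoch q q n))"
    (is "WP_Bailey_pair 1 k q ?\<alpha> ?\<beta>")
proof -
  have q0: "q \<noteq> 0"
    using q_eq r0 by simp
  have nz: "1 - q ^ N \<noteq> 0" if "0 < N" for N
    using no_root[OF that] by simp
  have q_pow: "q ^ n = r ^ n * r ^ n" for n
    by (simp add: q_eq mult_2 power_add flip: power_mult)
  define E where "E j = (-1) ^ j / (r ^ (j^2) * r ^ j)" for j :: nat
  define \<gamma> where "\<gamma> j = (if j = 0 then 0 else q^j * E j)" for j :: nat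
  define c where "c n = -(1 - k*q^n)/((1 - q*q^n)*(q*q^n))" for n :: nat
  define C where "C n = -(1 - k*q^n)/(1 - q*q^n) - 1/(q*q^n)" for n :: nat
  have r_square_Suc: "r ^ ((Suc j)^2) = r ^ (j^2) * r ^ j * r ^ j * r" for j
  proof -
    have "(Suc j)^2 = j^2 + j + j + 1"
      by (simp add: power2_eq_square)
    then show ?thesis
      by (simp add: power_add)
  qed
  have \<alpha>_eq: "?\<alpha> j = (1 + q^j) * E j" if "j \<noteq> 0" for j
    using that r0 by (simp add: E_def q_pow field_simps)
  have \<gamma>_Suc: "\<gamma> (Suc j) = - E j" for j
    using r0 by (simp add: \<gamma>_def E_def q_pow r_square_Suc field_simps) (simp add: q_eq power2_eq_square)
  show ?thesis
  proof (rule WP_Bailey_pair_by_certificate[where c = c and C = C and \<gamma> = \<gamma>])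
    show "?\<beta> (Suc n) = c n * ?\<beta> n" for n
    proof -
      have "r ^ ((Suc n)^2 + Suc n) = r ^ (n^2 + n) * (q*q^n)"
        by (simp add: r_square_Suc q_eq power_add power2_eq_square power_mult_distrib)
      then show ?thesis
        by (simp add: c_def qpoch_Suc divide_inverse inverse_mult_distrib mult_ac) (simp add: algebra_simps)
    qed
    show "?\<alpha> j * (qpoch_ratio (k/1) q q m * qpoch_ratio k (1*q) q (m + 2*j) - c (m + j))
        = C (m + j) * (qpoch_ratio k (1*q) q (m + 2*j) * \<gamma> (Suc j) - qpoch_ratio (k/1) q q m * \<gamma> j)" for m j
    proof (cases "j = 0")
      case True
      \<comment> \<open>\<open>\<alpha>\<^sub>0 = 1\<close> is half the value of the general formula, so this case has its own identity\<close>
      show ?thesis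
        using WP_pair_iii_step0_identity[OF q0, of "q^m" k] nz[of "Suc m"] q0
        by (simp add: True \<gamma>_Suc \<gamma>_def[of 0] E_def c_def C_def qpoch_ratio_def)
    next
      case False
      have pow: "q^(m + 2*j) = q^m*(q^j)^2" "q^(m + j) = q^m*q^j"
        by (simp_all add: power_add mult.commute flip: power_mult)
      show ?thesis
        unfolding \<alpha>_eq[OF False] \<gamma>_Suc c_def C_def qpoch_ratio_def div_by_1 mult_1 pow
        unfolding \<gamma>_def if_not_P[OF False]
      proof (rule WP_pair_iii_step_identity[OF q0])
        show "1 - q * q ^ m \<noteq> 0"
          using nz[of "Suc m"] by simp
        show "1 - q * (q ^ m * (q ^ j)\<^sup>2) \<noteq> 0"
          using nz[of "Suc (m + 2*j)"] by (simp add: pow(1))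
        show "1 - q * (q ^ m * q ^ j) \<noteq> 0"
          using nz[of "Suc (m + j)"] by (simp add: pow(2))
      qed (use q0 in simp_all)
    qed
    show "qpoch_ratio k (1*q) q (Suc (2*n)) * ?\<alpha> (Suc n) + C n * \<gamma> (Suc n) = 0" for n
    proof -
      have pow: "q^Suc (2*n) = q*(q^n)^2" "q^Suc n = q*q^n"
        by (simp_all add: mult.commute flip: power_mult)
      show ?thesis
        unfolding \<alpha>_eq[OF Suc_not_Zero] C_def qpoch_ratio_def mult_1
        unfolding \<gamma>_def if_not_P[OF Suc_not_Zero] pow
      proof (rule WP_pair_iii_diagonal_identity[OF q0])
        show "1 - q*(q*(q^n)^2) \<noteq> 0"
          using nz[of "Suc (Suc (2*n))"] by (simp add: mult.commute flip: power_mult)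
        show "1 - q*q^n \<noteq> 0"
          using nz[of "Suc n"] by simp
      qed (use q0 in simp)
    qed
  qed (simp_all add: \<gamma>_def)
qed

theorem mainTheorem6:
  fixes r k :: complex
  assumes r_nz: "r \<noteq> 0"
    and r_generic: "\<forall>m::nat. m > 0 \<longrightarrow> r ^ m \<noteq> 1"
  defines "q \<equiv> r ^ 2"
  shows
   "WP_Bailey_pair q k q
      (\<lambda>n. if n = 0 then 1 else (-1) ^ n * (1 / q ^ n - q ^ (n + 1)) / (1 - q))
      (\<lambda>n. if n = 0 then 1 else (-1) ^ n * qpoch (k ^ 2) (q ^ 2) n / (q ^ n * qpoch (q ^ 2) (q ^ 2) n))
  \<and> WP_Bailey_pair q k q
      (\<lambda>n. if n = 0 then 1 else (1 / r ^ n + r ^ (n + 1)) / (1 + r))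
      (\<lambda>n. if n = 0 then 1 else qpoch k q n * qpoch (k / r) q n / (qpoch (r ^ 3) q n * qpoch q q n) * (1 / r ^ n))
  \<and> WP_Bailey_pair 1 k q
      (\<lambda>n. if n = 0 then 1 else (-1) ^ n * (1 / r ^ (n ^ 2)) * (1 / r ^ n + r ^ n))
      (\<lambda>n. if n = 0 then 1 else (-1) ^ n * qpoch k q n / (r ^ (n ^ 2 + n) * qpoch q q n))"
proof -
  have q_eq: "q = r^2"
    by (simp add: q_def)
  have r_no_root: "r ^ N \<noteq> 1" if "0 < N" for N
    using r_generic that by blast
  have q_no_root: "q ^ N \<noteq> 1" if "0 < N" for N
    using r_no_root[of "2*N"] that by (simp add: q_eq power_mult)
  have q_nz: "q \<noteq> 0"
    using r_nz by (simp add: q_eq)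
  show ?thesis
    using WP_Bailey_pair_i[OF q_nz q_no_root]
      WP_Bailey_pair_ii[OF q_eq r_nz r_no_root]
      WP_Bailey_pair_iii[OF q_eq r_nz q_no_root]
    by blast
qed

end
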